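(* For all $0\le t<1$ and $x\in\mathbb{R}$, $W^*(t,x)\ge h(t,x)$, where $$W^*(t,x)=\begin{cases}(1-t)^{q/2}G_q(|x|/\sqrt{1-t})\,w(A^* ), & |x|>A^*\sqrt{1-t},\\ h(t,x), & |x|\le A^*\sqrt{1-t}.\end{cases}$$
   Context: $q>0$. $F_q(y):=\int_0^\infty u^{q-1}e^{yu-u^2/2}\,\mathrm{d}u$ and $G_q(y):=F_q(-y)$. $D^*>0$ is the unique positive root of $q-D(F_q+G_q)'(D)/(F_q+G_q)(D)=0$. $\overline{U}(t,x)=(1-t)^{q/2}(D^* )^q(F_q+G_q)(x/\sqrt{1-t})/(F_q+G_q)(D^* )$ if $|x|<D^*\sqrt{1-t}$, and $|x|^q$ otherwise. $h(t,x)=\overline{U}(t,x)-|x|^q$ if $|x|<D^*\sqrt{1-t}$, and $0$ otherwise. $w(A):=\frac{1}{G_q(A)}[(D^* )^q(F_q+G_q)(A)/(F_q+G_q)(D^* )-A^q]$ for $0\le A\le D^*$. $A^*$ is the unique maximizer of $w$ over $[0,D^*]$. *)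

theory Defs
  imports "HOL-Analysis.Analysis"
begin

definition Fq :: "real \<Rightarrow> real \<Rightarrow> real" where
  "Fq q y = (LINT u:{0<..}|lborel. u powr (q - 1) * exp (y * u - u\<^sup>2 / 2))"

definition Gq :: "real \<Rightarrow> real \<Rightarrow> real" where
  "Gq q y = Fq q (- y)"

definition FGq :: "real \<Rightarrow> real \<Rightarrow> real" where
  "FGq q y = Fq q y + Gq q y"

definition Dstar :: "real \<Rightarrow> real" where
  "Dstar q = (THE D. D > 0 \<and> q - D * deriv (FGq q) D / FGq q D = 0)"

definition Ubar :: "real \<Rightarrow> real \<Rightarrow> real \<Rightarrow> real" where
  "Ubar q t x = (if \<bar>x\<bar> < Dstar q * sqrt (1 - t)
     then (1 - t) powr (q / 2) * (Dstar q) powr q * FGq q (x / sqrt (1 - t)) / FGq q (Dstar q)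
     else \<bar>x\<bar> powr q)"

definition hfun :: "real \<Rightarrow> real \<Rightarrow> real \<Rightarrow> real" where
  "hfun q t x = (if \<bar>x\<bar> < Dstar q * sqrt (1 - t) then Ubar q t x - \<bar>x\<bar> powr q else 0)"

definition wfun :: "real \<Rightarrow> real \<Rightarrow> real" where
  "wfun q A = (1 / Gq q A) * ((Dstar q) powr q * FGq q A / FGq q (Dstar q) - A powr q)"

definition Astar :: "real \<Rightarrow> real" where
  "Astar q = (THE A. A \<in> {0..Dstar q} \<and> (\<forall>B\<in>{0..Dstar q}. wfun q B \<le> wfun q A))"

definition Wstar :: "real \<Rightarrow> real \<Rightarrow> real \<Rightarrow> real" where
  "Wstar q t x = (if \<bar>x\<bar> > Astar q * sqrt (1 - t)
     then (1 - t) powr (q / 2) * Gq q (\<bar>x\<bar> / sqrt (1 - t)) * wfun q (Astar q)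
     else hfun q t x)"

end

(*
  Outside the band |x| \<le> A* sqrt (1 - t) the substitution y = |x| / sqrt (1 - t) turns h into
  (1 - t)^(q/2) G_q(y) w(y) for y < D*, and into 0 beyond, so the inequality says exactly that A*
  maximizes w on [0, D*]. The substance is that D* and A* are well defined. The moments satisfy
  F_p' = F_(p+1) and F_(p+2) = y F_(p+1) + p F_p, so r = (F + G)'/(F + G) solves the Riccati
  equation r' = q + y r - r^2, whose right-hand side is positive on [0, \<infinity>); hence D r(D) is
  strictly increasing and D* is unique. For A*, the numerator of w', weighted by exp(-A^2/2), has a
  derivative with the sign of 2A^2 - (q - 1), so it has at most two positive zeros. One of them is D*;
  two maximizers of w would produce two more (an interior maximum and a minimum between them).
*)

theory Submission
  imports Defs "HOL-Real_Asymp.Real_Asymp"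
begin

definition Fq_kernel :: "real \<Rightarrow> real \<Rightarrow> real \<Rightarrow> real" where
  "Fq_kernel p y u = u powr (p - 1) * exp (y * u - u\<^sup>2 / 2)"

lemma Fq_eq_integral_kernel: "Fq p y = (LINT u:{0<..}|lborel. Fq_kernel p y u)"
  unfolding Fq_def Fq_kernel_def ..

lemma Fq_kernel_pos: "u > 0 \<Longrightarrow> Fq_kernel p y u > 0"
  unfolding Fq_kernel_def by simp

lemma Fq_kernel_Suc_exponent: "u > 0 \<Longrightarrow> Fq_kernel (p + 1) y u = u * Fq_kernel p y u"
  unfolding Fq_kernel_def using powr_add[of u "p - 1" 1] by simp

lemma Fq_kernel_shift: "Fq_kernel p (y + h) u = exp (h * u) * Fq_kernel p y u"
  unfolding Fq_kernel_def by (simp add: exp_add[symmetric] algebra_simps)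

lemma set_integrable_Gamma_kernel:
  fixes p :: real
  assumes "p > 0"
  shows "set_integrable lborel {0<..} (\<lambda>u. u powr (p - 1) / exp u)"
proof -
  have "\<And>u. ennreal (indicator {0<..} u * u powr (p - 1) / exp u)
      = ennreal (indicator {0..} u * u powr (p - 1) / exp u)"
    by (auto simp: indicator_def)
  then have "(\<integral>\<^sup>+ u. ennreal (indicator {0<..} u * u powr (p - 1) / exp u) \<partial>lborel)
      = ennreal (Gamma p)"
    using Gamma_conv_nn_integral_real[OF assms] by presburger
  then show ?thesis
    unfolding set_integrable_def by (intro integrableI_bounded) measurable
qed

lemma set_integrable_Fq_kernel:
  assumes "p > 0"
  shows "set_integrable lborel {0<..} (Fq_kernel p y)"
proof (rule set_integrable_bound)
  show "set_integrable lborel {0<..} (\<lambda>u. exp ((y + 1)\<^sup>2 / 2) * (u powr (p - 1) / exp u))"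
    using set_integrable_Gamma_kernel[OF assms] by (rule set_integrable_mult_right)
  show "set_borel_measurable lborel {0<..} (Fq_kernel p y)"
    unfolding set_borel_measurable_def Fq_kernel_def by measurable
  show "AE u in lborel. u \<in> {0<..} \<longrightarrow>
      norm (Fq_kernel p y u) \<le> norm (exp ((y + 1)\<^sup>2 / 2) * (u powr (p - 1) / exp u))"
  proof (rule AE_I2, intro impI)
    fix u :: real
    assume "u \<in> {0<..}"
    have "y * u - u\<^sup>2 / 2 \<le> (y + 1)\<^sup>2 / 2 - u"
      using sum_squares_ge_zero[of "y + 1 - u" 0] by (simp add: power2_eq_square algebra_simps)
    then have "exp (y * u - u\<^sup>2 / 2) \<le> exp ((y + 1)\<^sup>2 / 2) / exp u"
      by (simp add: exp_diff[symmetric])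
    then have "Fq_kernel p y u \<le> u powr (p - 1) * (exp ((y + 1)\<^sup>2 / 2) / exp u)"
      unfolding Fq_kernel_def by (intro mult_left_mono) auto
    then show "norm (Fq_kernel p y u) \<le> norm (exp ((y + 1)\<^sup>2 / 2) * (u powr (p - 1) / exp u))"
      using Fq_kernel_pos[of u p y] \<open>u \<in> {0<..}\<close> by (simp add: mult_ac)
  qed
qed

lemma Fq_pos:
  assumes "p > 0"
  shows "Fq p y > 0"
proof -
  let ?f = "\<lambda>u. indicator {0<..} u * Fq_kernel p y u"
  have int: "integrable lborel ?f"
    using set_integrable_Fq_kernel[OF assms] by (simp add: set_integrable_def)
  have nonneg: "AE u in lborel. 0 \<le> ?f u"
    by (auto simp: indicator_def less_imp_le[OF Fq_kernel_pos])
  have "integral\<^sup>L lborel ?f \<noteq> 0"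
  proof
    assume "integral\<^sup>L lborel ?f = 0"
    then have "AE u in lborel. ?f u = 0"
      using integral_nonneg_eq_0_iff_AE[OF int nonneg] by simp
    then have "AE u in lborel. u \<notin> {0<..<1::real}"
      by eventually_elim (use Fq_kernel_pos[of _ p y] in \<open>force simp: indicator_def\<close>)
    then have "emeasure lborel {u::real. \<not> u \<notin> {0<..<1}} = 0"
      by (subst (asm) AE_iff_measurable[OF _ refl]) auto
    moreover have "{u::real. \<not> u \<notin> {0<..<1}} = {0<..<1}"
      by auto
    ultimately show False by simp
  qed
  moreover have "integral\<^sup>L lborel ?f \<ge> 0"
    by (rule integral_nonneg_AE[OF nonneg])
  ultimately show ?thesis
    unfolding Fq_eq_integral_kernel set_lebesgue_integral_def by simp
qed

lemma abs_exp_minus_one_minus_le: "\<bar>exp x - 1 - x\<bar> \<le> x\<^sup>2 * exp \<bar>x\<bar>" for x :: real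
proof -
  obtain t where t: "\<bar>t\<bar> \<le> \<bar>x\<bar>" "exp x = (\<Sum>m<2. x ^ m / fact m) + exp t / fact 2 * x ^ 2"
    using Maclaurin_exp_le[of x 2] by blast
  then have "\<bar>exp x - 1 - x\<bar> = exp t / 2 * x\<^sup>2"
    by (simp add: lessThan_nat_numeral)
  also have "\<dots> \<le> x\<^sup>2 * exp \<bar>x\<bar>"
  proof -
    have "exp t \<le> exp \<bar>x\<bar>"
      using t(1) by simp
    then have "exp t / 2 \<le> exp \<bar>x\<bar>"
      using exp_gt_zero[of t] by linarith
    then show ?thesis
      by (metis mult.commute mult_right_mono zero_le_power2)
  qed
  finally show ?thesis .
qed

lemma abs_exp_difference_quotient_le:
  fixes h u :: real
  assumes "h \<noteq> 0" "\<bar>h\<bar> \<le> 1" "u \<ge> 0"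
  shows "\<bar>(exp (h * u) - 1) / h - u\<bar> \<le> \<bar>h\<bar> * (u\<^sup>2 * exp u)"
proof -
  have "\<bar>(exp (h * u) - 1) / h - u\<bar> = \<bar>exp (h * u) - 1 - h * u\<bar> / \<bar>h\<bar>"
    using assms(1) by (simp add: diff_divide_distrib flip: abs_divide)
  also have "\<dots> \<le> (h * u)\<^sup>2 * exp \<bar>h * u\<bar> / \<bar>h\<bar>"
    by (intro divide_right_mono abs_exp_minus_one_minus_le) simp
  also have "\<dots> = \<bar>h\<bar> * (u\<^sup>2 * exp \<bar>h * u\<bar>)"
    using assms(1) by (simp add: power2_eq_square abs_mult_self_eq field_simps)
  also have "\<dots> \<le> \<bar>h\<bar> * (u\<^sup>2 * exp u)"
    using assms by (intro mult_left_mono) (auto simp: abs_mult mult_left_le_one_le)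
  finally show ?thesis .
qed

lemma Fq_difference_quotient_bound:
  assumes "p > 0" "h \<noteq> 0" "\<bar>h\<bar> \<le> 1"
  shows "\<bar>(Fq p (y + h) - Fq p y) / h - Fq (p + 1) y\<bar> \<le> \<bar>h\<bar> * Fq (p + 2) (y + 1)"
proof -
  define D where "D u = (Fq_kernel p (y + h) u - Fq_kernel p y u) / h - Fq_kernel (p + 1) y u" for u
  have int_D: "set_integrable lborel {0<..} D"
    unfolding D_def using assms(1) by (intro set_integral_diff set_integrable_divide set_integrable_Fq_kernel) auto
  have int_bound: "set_integrable lborel {0<..} (\<lambda>u. \<bar>h\<bar> * Fq_kernel (p + 2) (y + 1) u)"
    using assms(1) by (intro set_integrable_mult_right set_integrable_Fq_kernel) auto
  have "(Fq p (y + h) - Fq p y) / h - Fq (p + 1) y = (LINT u:{0<..}|lborel. D u)"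
    unfolding D_def Fq_eq_integral_kernel using assms(1)
    by (simp add: set_integrable_Fq_kernel set_integral_diff(2) set_integral_divide_zero)
  moreover have "\<bar>D u\<bar> \<le> \<bar>h\<bar> * Fq_kernel (p + 2) (y + 1) u" if "u > 0" for u
  proof -
    have "Fq_kernel (p + 2) (y + 1) u = u\<^sup>2 * exp u * Fq_kernel p y u"
      using Fq_kernel_Suc_exponent[OF that, of "p + 1" "y + 1"] Fq_kernel_Suc_exponent[OF that, of p "y + 1"]
        Fq_kernel_shift[of p y 1 u]
      by (simp add: power2_eq_square add.assoc mult_ac)
    moreover have "D u = Fq_kernel p y u * ((exp (h * u) - 1) / h - u)"
      unfolding D_def Fq_kernel_shift Fq_kernel_Suc_exponent[OF that]
      by (simp add: algebra_simps diff_divide_distrib)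
    ultimately show ?thesis
      using abs_exp_difference_quotient_le[OF assms(2,3), of u] Fq_kernel_pos[OF that, of p y] that
      by (simp add: abs_mult mult_left_mono mult_ac)
  qed
  then have "(LINT u:{0<..}|lborel. \<bar>D u\<bar>)
      \<le> (LINT u:{0<..}|lborel. \<bar>h\<bar> * Fq_kernel (p + 2) (y + 1) u)"
    by (intro set_integral_mono set_integrable_abs int_D int_bound) auto
  moreover have "\<bar>LINT u:{0<..}|lborel. D u\<bar> \<le> (LINT u:{0<..}|lborel. \<bar>D u\<bar>)"
    using set_integral_norm_bound[OF int_D] by simp
  ultimately show ?thesis
    unfolding Fq_eq_integral_kernel by simp
qed

lemma Fq_has_real_derivative:
  assumes "p > 0"
  shows "(Fq p has_real_derivative Fq (p + 1) y) (at y)"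
proof -
  have "((\<lambda>h. (Fq p (y + h) - Fq p y) / h - Fq (p + 1) y) \<longlongrightarrow> 0) (at 0)"
  proof (rule Lim_null_comparison)
    have "eventually (\<lambda>h::real. h \<noteq> 0 \<and> \<bar>h\<bar> \<le> 1) (at 0)"
      unfolding eventually_at by (rule exI[of _ 1]) auto
    then show "\<forall>\<^sub>F h in at 0.
        norm ((Fq p (y + h) - Fq p y) / h - Fq (p + 1) y) \<le> \<bar>h\<bar> * Fq (p + 2) (y + 1)"
      by eventually_elim (use Fq_difference_quotient_bound[OF assms] in auto)
    show "((\<lambda>h. \<bar>h\<bar> * Fq (p + 2) (y + 1)) \<longlongrightarrow> 0) (at (0::real))"
      by (intro tendsto_mult_left_zero tendsto_rabs_zero tendsto_ident_at)
  qed
  then show ?thesis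
    unfolding DERIV_def by (simp add: LIM_zero_iff)
qed

lemma Fq_kernel_has_real_derivative:
  assumes "u > 0"
  shows "(Fq_kernel (p + 1) y has_real_derivative
      p * Fq_kernel p y u + y * Fq_kernel (p + 1) y u - Fq_kernel (p + 2) y u) (at u)"
proof -
  have "(Fq_kernel (p + 1) y has_real_derivative
      p * u powr (p - 1) * exp (y * u - u\<^sup>2 / 2) + u powr p * (exp (y * u - u\<^sup>2 / 2) * (y - u))) (at u)"
    unfolding Fq_kernel_def[abs_def] using assms
    by (auto intro!: derivative_eq_intros simp: power2_eq_square field_simps)
  moreover have "Fq_kernel (p + 2) y u = u * Fq_kernel (p + 1) y u"
    using Fq_kernel_Suc_exponent[OF assms, of "p + 1" y] by (simp add: add.assoc)
  ultimately show ?thesis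
    unfolding Fq_kernel_def by (simp add: algebra_simps)
qed

text \<open>Integration by parts: the boundary terms of \<open>u\<^sup>p exp (y u - u\<^sup>2 / 2)\<close> vanish
  at \<open>0\<close> and \<open>\<infinity>\<close>.\<close>

lemma Fq_recurrence:
  assumes "p > 0"
  shows "Fq (p + 2) y = y * Fq (p + 1) y + p * Fq p y"
proof -
  define f where "f u = p * Fq_kernel p y u + y * Fq_kernel (p + 1) y u - Fq_kernel (p + 2) y u" for u
  have int_f: "set_integrable lborel {0<..} f"
    unfolding f_def using assms
    by (intro set_integral_diff set_integral_add set_integrable_mult_right set_integrable_Fq_kernel) auto
  have interval: "einterval (ereal 0) \<infinity> = {0<..}"
    by (auto simp: einterval_def)
  have "(LBINT u=ereal 0..\<infinity>. f u) = 0 - 0"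
  proof (rule interval_integral_FTC_integrable[where F = "Fq_kernel (p + 1) y"])
    show "(Fq_kernel (p + 1) y has_vector_derivative f u) (at u)" if "ereal 0 < ereal u" for u
      using Fq_kernel_has_real_derivative[of u p y] that
      by (simp add: f_def has_real_derivative_iff_has_vector_derivative)
    show "isCont f u" if "ereal 0 < ereal u" for u
      using that unfolding f_def Fq_kernel_def by (auto intro!: continuous_intros)
    show "set_integrable lborel (einterval (ereal 0) \<infinity>) f"
      using int_f by (simp add: interval)
    show "((Fq_kernel (p + 1) y \<circ> real_of_ereal) \<longlongrightarrow> 0) (at_right (ereal 0))"
      unfolding ereal_tendsto_simps Fq_kernel_def using assms by real_asymp
    show "((Fq_kernel (p + 1) y \<circ> real_of_ereal) \<longlongrightarrow> 0) (at_left \<infinity>)"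
      unfolding ereal_tendsto_simps Fq_kernel_def by real_asymp
  qed simp
  then have "(LINT u:{0<..}|lborel. f u) = 0"
    by (simp add: interval_lebesgue_integral_def interval)
  moreover have "(LINT u:{0<..}|lborel. f u) = p * Fq p y + y * Fq (p + 1) y - Fq (p + 2) y"
    unfolding f_def Fq_eq_integral_kernel using assms
    by (simp add: set_integrable_Fq_kernel set_integral_diff(2) set_integral_add(2) set_integrable_mult_right)
  ultimately show ?thesis
    by simp
qed

definition dFGq :: "real \<Rightarrow> real \<Rightarrow> real" where
  "dFGq q y = Fq (q + 1) y - Fq (q + 1) (- y)"

definition dGq :: "real \<Rightarrow> real \<Rightarrow> real" where
  "dGq q y = - Fq (q + 1) (- y)"

definition logderiv_FGq :: "real \<Rightarrow> real \<Rightarrow> real" where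
  "logderiv_FGq q y = dFGq q y / FGq q y"

lemma Gq_pos: "q > 0 \<Longrightarrow> Gq q y > 0"
  unfolding Gq_def using Fq_pos by simp

lemma FGq_pos: "q > 0 \<Longrightarrow> FGq q y > 0"
  unfolding FGq_def using Fq_pos Gq_pos by (simp add: add_pos_pos)

lemma FGq_minus: "FGq q (- y) = FGq q y"
  unfolding FGq_def Gq_def by simp

lemma Fq_reflect_has_real_derivative:
  assumes "p > 0"
  shows "((\<lambda>y. Fq p (- y)) has_real_derivative - Fq (p + 1) (- y)) (at y)"
  using DERIV_chain2[OF Fq_has_real_derivative[OF assms] DERIV_minus[OF DERIV_ident]] by simp

lemma FGq_has_real_derivative:
  assumes "q > 0"
  shows "(FGq q has_real_derivative dFGq q y) (at y)"
  unfolding FGq_def[abs_def] Gq_def dFGq_def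
  using DERIV_add[OF Fq_has_real_derivative Fq_reflect_has_real_derivative, OF assms assms] by simp

lemma Gq_has_real_derivative:
  assumes "q > 0"
  shows "(Gq q has_real_derivative dGq q y) (at y)"
  unfolding Gq_def[abs_def] dGq_def using Fq_reflect_has_real_derivative[OF assms] .

lemma dFGq_has_real_derivative:
  assumes "q > 0"
  shows "(dFGq q has_real_derivative y * dFGq q y + q * FGq q y) (at y)"
proof -
  have "(dFGq q has_real_derivative Fq (q + 2) y + Fq (q + 2) (- y)) (at y)"
    unfolding dFGq_def[abs_def]
    using DERIV_diff[OF Fq_has_real_derivative Fq_reflect_has_real_derivative, of "q + 1" "q + 1"] assms
    by (simp add: add.assoc)
  then show ?thesis
    using Fq_recurrence[OF assms, of y] Fq_recurrence[OF assms, of "- y"]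
    unfolding dFGq_def FGq_def Gq_def by (simp add: algebra_simps)
qed

lemma dGq_has_real_derivative:
  assumes "q > 0"
  shows "(dGq q has_real_derivative y * dGq q y + q * Gq q y) (at y)"
proof -
  have "(dGq q has_real_derivative Fq (q + 2) (- y)) (at y)"
    unfolding dGq_def[abs_def]
    using DERIV_minus[OF Fq_reflect_has_real_derivative, of "q + 1"] assms by (simp add: add.assoc)
  then show ?thesis
    using Fq_recurrence[OF assms, of "- y"] unfolding dGq_def Gq_def by (simp add: algebra_simps)
qed

lemma dFGq_0: "dFGq q 0 = 0"
  unfolding dFGq_def by simp

lemma dFGq_pos:
  assumes "q > 0" "y > 0"
  shows "dFGq q y > 0"
proof -
  have "Fq (q + 1) (- y) < Fq (q + 1) y"
  proof (rule DERIV_pos_imp_increasing[of "- y" y "Fq (q + 1)"])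
    show "- y < y"
      using assms(2) by simp
  next
    fix x
    show "\<exists>d. (Fq (q + 1) has_real_derivative d) (at x) \<and> d > 0"
      using Fq_has_real_derivative[of "q + 1" x] Fq_pos[of "q + 1 + 1" x] assms(1) by auto
  qed
  then show ?thesis
    unfolding dFGq_def by simp
qed

lemma dFGq_nonneg: "q > 0 \<Longrightarrow> y \<ge> 0 \<Longrightarrow> dFGq q y \<ge> 0"
  using dFGq_pos[of q y] dFGq_0[of q] by (cases "y = 0") auto

lemma logderiv_FGq_has_real_derivative:
  assumes "q > 0"
  shows "(logderiv_FGq q has_real_derivative q + y * logderiv_FGq q y - (logderiv_FGq q y)\<^sup>2) (at y)"
proof -
  have nz: "FGq q y \<noteq> 0"
    using FGq_pos[OF assms] by (simp add: less_imp_neq[symmetric])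
  show ?thesis
    unfolding logderiv_FGq_def[abs_def]
    by (rule DERIV_cong[OF DERIV_divide[OF dFGq_has_real_derivative FGq_has_real_derivative nz, OF assms assms]])
       (simp add: nz field_simps power2_eq_square)
qed

text \<open>Multiplied by \<open>exp (- y\<^sup>2 / 2) (F + G)\<^sup>2\<close>, the right-hand side of the Riccati
  equation becomes nondecreasing on \<open>[0, \<infinity>)\<close>: its derivative is
  \<open>exp (- y\<^sup>2 / 2) (F + G) (F + G)'\<close>.\<close>

lemma riccati_rhs_pos:
  assumes "q > 0" "y \<ge> 0"
  shows "q + y * logderiv_FGq q y - (logderiv_FGq q y)\<^sup>2 > 0"
proof -
  define P where "P y = exp (- (y * y) / 2) *
    (q * (FGq q y * FGq q y) + y * FGq q y * dFGq q y - dFGq q y * dFGq q y)" for y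
  have P_deriv: "(P has_real_derivative exp (- (x * x) / 2) * (FGq q x * dFGq q x)) (at x)" for x
  proof -
    note d1 = FGq_has_real_derivative[OF assms(1), of x]
      and d2 = dFGq_has_real_derivative[OF assms(1), of x]
    have e: "((\<lambda>y. exp (- (y * y) / 2)) has_real_derivative exp (- (x * x) / 2) * (- x)) (at x)"
      by (auto intro!: derivative_eq_intros simp: field_simps)
    show ?thesis
      unfolding P_def[abs_def]
      by (rule DERIV_cong[OF DERIV_mult'[OF e DERIV_diff[OF DERIV_add[OF
            DERIV_cmult[OF DERIV_mult'[OF d1 d1]] DERIV_mult'[OF DERIV_mult'[OF DERIV_ident d1] d2]]
            DERIV_mult'[OF d2 d2]]]]) algebra
  qed
  have "P 0 \<le> P y"
  proof (rule DERIV_nonneg_imp_nondecreasing[OF assms(2)])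
    fix x :: real
    assume "0 \<le> x"
    then show "\<exists>d. (P has_real_derivative d) (at x) \<and> d \<ge> 0"
      using P_deriv[of x] FGq_pos[OF assms(1), of x] dFGq_nonneg[OF assms(1), of x]
      by (intro exI[of _ "exp (- (x * x) / 2) * (FGq q x * dFGq q x)"]) simp
  qed
  moreover have "P 0 > 0"
    unfolding P_def using FGq_pos[OF assms(1), of 0] assms(1) dFGq_0[of q] by simp
  moreover have "P y = exp (- (y * y) / 2) * (FGq q y * FGq q y) *
      (q + y * logderiv_FGq q y - (logderiv_FGq q y)\<^sup>2)"
    unfolding P_def logderiv_FGq_def using FGq_pos[OF assms(1), of y]
    by (simp add: power2_eq_square field_simps)
  ultimately have "0 < exp (- (y * y) / 2) * (FGq q y * FGq q y) *
      (q + y * logderiv_FGq q y - (logderiv_FGq q y)\<^sup>2)"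
    by linarith
  moreover have "0 < exp (- (y * y) / 2) * (FGq q y * FGq q y)"
    using FGq_pos[OF assms(1), of y] by simp
  ultimately show ?thesis
    by (rule zero_less_mult_pos)
qed

lemma logderiv_FGq_strict_mono:
  assumes "q > 0" "0 \<le> a" "a < b"
  shows "logderiv_FGq q a < logderiv_FGq q b"
  by (rule DERIV_pos_imp_increasing[OF assms(3)])
     (use logderiv_FGq_has_real_derivative[OF assms(1)] riccati_rhs_pos[OF assms(1)] assms(2) in force)

lemma mult_logderiv_FGq_strict_mono:
  assumes "q > 0" "0 \<le> a" "a < b"
  shows "a * logderiv_FGq q a < b * logderiv_FGq q b"
proof -
  have "a * logderiv_FGq q a \<le> a * logderiv_FGq q b"
    using logderiv_FGq_strict_mono[OF assms] assms(2) by (simp add: mult_left_mono)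
  also have "\<dots> < b * logderiv_FGq q b"
    using logderiv_FGq_strict_mono[OF assms(1), of 0 b] assms
    by (intro mult_strict_right_mono) (auto simp: logderiv_FGq_def dFGq_0)
  finally show ?thesis .
qed

lemma mult_logderiv_FGq_root_exists:
  assumes "q > 0"
  shows "\<exists>D. D > 0 \<and> D * logderiv_FGq q D = q"
proof -
  let ?r = "logderiv_FGq q"
  have r1: "?r 1 > 0"
    using logderiv_FGq_strict_mono[OF assms, of 0 1] dFGq_0 by (simp add: logderiv_FGq_def)
  define b where "b = 1 + q / ?r 1"
  have b: "b > 1"
    unfolding b_def using assms r1 by simp
  have "q < b * ?r 1"
    unfolding b_def using r1 by (simp add: distrib_right)
  also have "\<dots> \<le> b * ?r b"
    using logderiv_FGq_strict_mono[OF assms, of 1 b] b by (simp add: mult_left_mono)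
  finally have "q \<le> b * ?r b"
    by simp
  moreover have "continuous_on {0..b} (\<lambda>D. D * ?r D)"
    using DERIV_isCont[OF logderiv_FGq_has_real_derivative[OF assms]]
    by (intro continuous_on_mult continuous_on_id continuous_at_imp_continuous_on) blast
  ultimately obtain D where "0 \<le> D" "D * ?r D = q"
    using IVT'[of "\<lambda>D. D * ?r D" 0 q b] assms b by auto
  moreover have "D \<noteq> 0"
    using calculation assms by auto
  ultimately show ?thesis
    by (intro exI[of _ D]) auto
qed

lemma Dstar:
  assumes "q > 0"
  shows "Dstar q > 0" and "Dstar q * logderiv_FGq q (Dstar q) = q"
proof -
  have "deriv (FGq q) D = dFGq q D" for D
    by (rule DERIV_imp_deriv[OF FGq_has_real_derivative[OF assms]])
  then have root_iff: "(D > 0 \<and> q - D * deriv (FGq q) D / FGq q D = 0)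
      \<longleftrightarrow> (D > 0 \<and> D * logderiv_FGq q D = q)" for D
    by (auto simp: logderiv_FGq_def)
  obtain D where D: "D > 0" "D * logderiv_FGq q D = q"
    using mult_logderiv_FGq_root_exists[OF assms] by blast
  moreover have "E = D" if "E > 0" "E * logderiv_FGq q E = q" for E
    using mult_logderiv_FGq_strict_mono[OF assms, of E D] mult_logderiv_FGq_strict_mono[OF assms, of D E]
      that D by (cases E D rule: linorder_cases) auto
  ultimately have "Dstar q = D"
    unfolding Dstar_def root_iff by blast
  with D show "Dstar q > 0" "Dstar q * logderiv_FGq q (Dstar q) = q"
    by auto
qed

definition Ubar_coeff :: "real \<Rightarrow> real" where
  "Ubar_coeff q = Dstar q powr q / FGq q (Dstar q)"

definition wnum :: "real \<Rightarrow> real \<Rightarrow> real" where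
  "wnum q A = Ubar_coeff q * FGq q A - A powr q"

definition dwnum :: "real \<Rightarrow> real \<Rightarrow> real" where
  "dwnum q A = Ubar_coeff q * dFGq q A - q * A powr (q - 1)"

text \<open>Up to the positive factor \<open>exp (A\<^sup>2 / 2) / G\<^sup>2\<close> this is \<open>w'\<close>; the Gaussian weight
  makes its derivative factor through \<open>2 A\<^sup>2 - (q - 1)\<close>.\<close>

definition wcrit :: "real \<Rightarrow> real \<Rightarrow> real" where
  "wcrit q A = exp (- (A * A) / 2) * (dwnum q A * Gq q A - wnum q A * dGq q A)"

lemma wfun_eq: "wfun q A = wnum q A / Gq q A"
  unfolding wfun_def wnum_def Ubar_coeff_def by simp

lemma Ubar_coeff_pos: "q > 0 \<Longrightarrow> Ubar_coeff q > 0"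
  unfolding Ubar_coeff_def using Dstar(1)[of q] FGq_pos[of q "Dstar q"] by simp

lemma wnum_Dstar: "q > 0 \<Longrightarrow> wnum q (Dstar q) = 0"
  unfolding wnum_def Ubar_coeff_def using FGq_pos[of q "Dstar q"] by simp

lemma dwnum_Dstar:
  assumes "q > 0"
  shows "dwnum q (Dstar q) = 0"
proof -
  let ?D = "Dstar q"
  have "dFGq q ?D = q * FGq q ?D / ?D"
    using Dstar[OF assms] FGq_pos[OF assms, of ?D] by (simp add: logderiv_FGq_def field_simps)
  moreover have "?D powr q = ?D * ?D powr (q - 1)"
    using powr_add[of ?D 1 "q - 1"] Dstar(1)[OF assms] by simp
  ultimately show ?thesis
    unfolding dwnum_def Ubar_coeff_def using FGq_pos[OF assms, of ?D] Dstar(1)[OF assms]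
    by (simp add: field_simps)
qed

lemma wcrit_Dstar: "q > 0 \<Longrightarrow> wcrit q (Dstar q) = 0"
  unfolding wcrit_def using wnum_Dstar dwnum_Dstar by simp

lemma wnum_has_real_derivative:
  assumes "q > 0" "A > 0"
  shows "(wnum q has_real_derivative dwnum q A) (at A)"
  unfolding wnum_def[abs_def] dwnum_def
  by (rule DERIV_diff[OF DERIV_cmult[OF FGq_has_real_derivative[OF assms(1)]]
        has_real_derivative_powr[OF assms(2)]])

lemma dwnum_has_real_derivative:
  assumes "q > 0" "A > 0"
  shows "(dwnum q has_real_derivative
      Ubar_coeff q * (A * dFGq q A + q * FGq q A) - q * ((q - 1) * A powr (q - 2))) (at A)"
  unfolding dwnum_def[abs_def]
  by (rule DERIV_cong[OF DERIV_diff[OF DERIV_cmult[OF dFGq_has_real_derivative[OF assms(1)]]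
        DERIV_cmult[OF has_real_derivative_powr[OF assms(2)]]]])
     (simp add: diff_diff_eq)

lemma wfun_has_real_derivative:
  assumes "q > 0" "A > 0"
  shows "(wfun q has_real_derivative exp (A * A / 2) * wcrit q A / (Gq q A * Gq q A)) (at A)"
proof -
  have "Gq q A \<noteq> 0"
    using Gq_pos[OF assms(1), of A] by simp
  then show ?thesis
    unfolding wfun_eq[abs_def]
    by (intro DERIV_cong[OF DERIV_divide[OF wnum_has_real_derivative[OF assms]
          Gq_has_real_derivative[OF assms(1)]]])
       (simp_all add: wcrit_def exp_minus field_simps)
qed

lemma wcrit_has_real_derivative:
  assumes "q > 0" "A > 0"
  shows "(wcrit q has_real_derivative
      exp (- (A * A) / 2) * Gq q A * (q * A powr (q - 2) * (2 * A * A - (q - 1)))) (at A)"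
proof -
  have e: "((\<lambda>y. exp (- (y * y) / 2)) has_real_derivative exp (- (A * A) / 2) * (- A)) (at A)"
    by (auto intro!: derivative_eq_intros simp: field_simps)
  have powr_eqs: "A powr (q - 1) = A * A powr (q - 2)" "A powr q = A * A * A powr (q - 2)"
    using powr_add[of A 1 "q - 2"] powr_add[of A 2 "q - 2"] assms(2)
    by (simp_all add: powr_numeral power2_eq_square)
  show ?thesis
    unfolding wcrit_def[abs_def]
    by (rule DERIV_cong[OF DERIV_mult'[OF e DERIV_diff[OF
          DERIV_mult'[OF dwnum_has_real_derivative[OF assms] Gq_has_real_derivative[OF assms(1)]]
          DERIV_mult'[OF wnum_has_real_derivative[OF assms] dGq_has_real_derivative[OF assms(1)]]]]])
       (unfold wnum_def dwnum_def powr_eqs, algebra)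
qed

lemma valley_no_three_zeros:
  fixes f f' :: "real \<Rightarrow> real"
  assumes deriv: "\<And>x. x > 0 \<Longrightarrow> (f has_real_derivative f' x) (at x)"
    and decreasing: "\<And>x. 0 < x \<Longrightarrow> x < s \<Longrightarrow> f' x < 0"
    and increasing: "\<And>x. s < x \<Longrightarrow> f' x > 0"
    and "0 < a" "a < b" "b < c" "f a = 0" "f b = 0" "f c = 0"
  shows False
proof -
  have cont: "continuous_on {u..v} f" if "0 < u" for u v
    using DERIV_isCont[OF deriv] that by (intro continuous_at_imp_continuous_on) auto
  show False
  proof (cases "b \<le> s")
    case True
    have "f b < f a"
      by (rule DERIV_neg_imp_decreasing_open[OF \<open>a < b\<close> _ cont[OF \<open>0 < a\<close>]])
         (use deriv decreasing True \<open>0 < a\<close> in force)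
    then show False
      using assms by simp
  next
    case False
    have "0 < b"
      using \<open>0 < a\<close> \<open>a < b\<close> by simp
    have "f b < f c"
    proof (rule DERIV_pos_imp_increasing_open[OF \<open>b < c\<close> _ cont[OF \<open>0 < b\<close>]])
      fix x
      assume "b < x"
      then show "\<exists>y. (f has_real_derivative y) (at x) \<and> 0 < y"
        using deriv[of x] increasing[of x] False \<open>0 < b\<close> by auto
    qed
    then show False
      using assms by simp
  qed
qed

lemma wcrit_no_three_zeros:
  assumes "q > 0" "0 < a" "a < b" "b < c" "wcrit q a = 0" "wcrit q b = 0" "wcrit q c = 0"
  shows False
proof (rule valley_no_three_zeros[OF wcrit_has_real_derivative[OF assms(1)] _ _ assms(2-)])
  define s where "s = sqrt (max 0 ((q - 1) / 2))"
  have s: "s \<ge> 0" "s * s = max 0 ((q - 1) / 2)"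
    unfolding s_def by (simp_all flip: real_sqrt_mult)
  have pos: "exp (- (x * x) / 2) * Gq q x * (q * x powr (q - 2)) > 0" if "x > 0" for x
    using that Gq_pos[OF assms(1), of x] assms(1) by simp
  show "exp (- (x * x) / 2) * Gq q x * (q * x powr (q - 2) * (2 * x * x - (q - 1))) < 0"
    if "0 < x" "x < s" for x
  proof -
    have "0 < x * x" "x * x < s * s"
      using that mult_strict_mono[OF that(2) that(2)] by auto
    then have "x * x < (q - 1) / 2"
      using s(2) by (auto simp: max_def split: if_splits)
    then show ?thesis
      using pos[OF that(1)] by (simp add: mult_pos_neg mult.assoc[symmetric])
  qed
  show "exp (- (x * x) / 2) * Gq q x * (q * x powr (q - 2) * (2 * x * x - (q - 1))) > 0"
    if "s < x" for x
  proof -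
    have "0 < x" "s * s < x * x"
      using that s(1) mult_strict_mono[OF that that] by auto
    then have "(q - 1) / 2 < x * x"
      using s(2) max.cobounded2[of "(q - 1) / 2" 0] by linarith
    then show ?thesis
      using pos[OF \<open>0 < x\<close>] by (simp add: mult.assoc[symmetric])
  qed
qed

lemma interior_argmin_between_maxima:
  fixes f :: "real \<Rightarrow> real"
  assumes "continuous_on {a..b} f" "a < b" "f a = f b" "\<forall>y\<in>{a..b}. f y \<le> f b"
  obtains m where "a < m" "m < b" "\<forall>y\<in>{a..b}. f m \<le> f y"
proof -
  obtain m0 where m0: "m0 \<in> {a..b}" "\<forall>y\<in>{a..b}. f m0 \<le> f y"
    using continuous_attains_inf[OF compact_Icc _ assms(1)] assms(2) by auto
  show ?thesis
  proof (cases "a < m0 \<and> m0 < b")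
    case True
    then show ?thesis
      using that m0(2) by blast
  next
    case False
    then have "f m0 = f b"
      using m0(1) assms(3) by auto
    moreover have "f ((a + b) / 2) \<le> f b"
      using assms(2,4) by simp
    ultimately have "\<forall>y\<in>{a..b}. f ((a + b) / 2) \<le> f y"
      using m0(2) by fastforce
    then show ?thesis
      using that[of "(a + b) / 2"] assms(2) by simp
  qed
qed

lemma wcrit_eq_0_if_local_extremum:
  assumes "q > 0" "A > 0" "d > 0"
    and "(\<forall>y. \<bar>A - y\<bar> < d \<longrightarrow> wfun q y \<le> wfun q A) \<or>
      (\<forall>y. \<bar>A - y\<bar> < d \<longrightarrow> wfun q A \<le> wfun q y)"
  shows "wcrit q A = 0"
proof -
  have "exp (A * A / 2) * wcrit q A / (Gq q A * Gq q A) = 0"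
    using DERIV_local_max[OF wfun_has_real_derivative[OF assms(1,2)] assms(3)]
      DERIV_local_min[OF wfun_has_real_derivative[OF assms(1,2)] assms(3)] assms(4) by blast
  then show ?thesis
    using Gq_pos[OF assms(1), of A] by simp
qed

lemma wfun_0_pos: "q > 0 \<Longrightarrow> wfun q 0 > 0"
  unfolding wfun_eq wnum_def using Ubar_coeff_pos FGq_pos Gq_pos by simp

lemma wfun_Dstar: "q > 0 \<Longrightarrow> wfun q (Dstar q) = 0"
  unfolding wfun_eq using wnum_Dstar by simp

lemma continuous_on_wfun:
  assumes "q > 0"
  shows "continuous_on {0..b} (wfun q)"
proof -
  have "continuous_on {0..b} (FGq q)" "continuous_on {0..b} (Gq q)"
    using DERIV_isCont[OF FGq_has_real_derivative[OF assms]] DERIV_isCont[OF Gq_has_real_derivative[OF assms]]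
    by (auto intro!: continuous_at_imp_continuous_on)
  moreover have "continuous_on {0..b} (\<lambda>A. A powr q)"
    using assms by (intro continuous_on_powr') auto
  ultimately show ?thesis
    unfolding wfun_eq[abs_def] wnum_def using Gq_pos[OF assms]
    by (intro continuous_on_divide continuous_on_diff continuous_on_mult continuous_on_const)
       (auto simp: less_imp_neq[symmetric])
qed

lemma wfun_maximizer_pos:
  assumes "q > 0" "\<forall>B\<in>{0..Dstar q}. wfun q B \<le> wfun q A"
  shows "wfun q A > 0"
proof -
  have "wfun q 0 \<le> wfun q A"
    using assms(2) Dstar(1)[OF assms(1)] by simp
  then show ?thesis
    using wfun_0_pos[OF assms(1)] by linarith
qed

text \<open>Two maximizers \<open>A\<^sub>1 < A\<^sub>2\<close> would force a minimizer strictly between them;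
  with the zero at \<open>D*\<close> this gives three zeros of \<open>wcrit\<close>.\<close>

lemma wfun_maximizers_not_less:
  assumes "q > 0"
    and A1: "A1 \<in> {0..Dstar q}" "\<forall>B\<in>{0..Dstar q}. wfun q B \<le> wfun q A1"
    and A2: "A2 \<in> {0..Dstar q}" "\<forall>B\<in>{0..Dstar q}. wfun q B \<le> wfun q A2"
  shows "\<not> A1 < A2"
proof
  assume "A1 < A2"
  let ?D = "Dstar q"
  have "wfun q A1 = wfun q A2"
    using A1 A2 by (meson order_antisym)
  have "A2 < ?D"
    using A2(1) wfun_maximizer_pos[OF assms(1) A2(2)] wfun_Dstar[OF assms(1)] by (cases "A2 = ?D") auto
  have "0 < A2"
    using A1(1) \<open>A1 < A2\<close> by simp
  have "wcrit q A2 = 0"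
  proof (rule wcrit_eq_0_if_local_extremum[OF assms(1) \<open>0 < A2\<close>, of "min A2 (?D - A2)"])
    show "(\<forall>y. \<bar>A2 - y\<bar> < min A2 (?D - A2) \<longrightarrow> wfun q y \<le> wfun q A2) \<or>
        (\<forall>y. \<bar>A2 - y\<bar> < min A2 (?D - A2) \<longrightarrow> wfun q A2 \<le> wfun q y)"
      using A2(2) by (auto simp: abs_less_iff)
  qed (use \<open>0 < A2\<close> \<open>A2 < ?D\<close> in simp)
  moreover obtain m where m: "A1 < m" "m < A2" "\<forall>y\<in>{A1..A2}. wfun q m \<le> wfun q y"
  proof (rule interior_argmin_between_maxima[of A1 A2 "wfun q"])
    show "continuous_on {A1..A2} (wfun q)"
      using continuous_on_subset[OF continuous_on_wfun[OF assms(1)], of "{A1..A2}" A2] A1(1) by auto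
    show "\<forall>y\<in>{A1..A2}. wfun q y \<le> wfun q A2"
      using A1(1) A2(1,2) by auto
  qed (use \<open>A1 < A2\<close> \<open>wfun q A1 = wfun q A2\<close> in auto)
  moreover have "0 < m"
    using A1(1) m(1) by simp
  moreover have "wcrit q m = 0"
  proof (rule wcrit_eq_0_if_local_extremum[OF assms(1) \<open>0 < m\<close>, of "min (m - A1) (A2 - m)"])
    show "(\<forall>y. \<bar>m - y\<bar> < min (m - A1) (A2 - m) \<longrightarrow> wfun q y \<le> wfun q m) \<or>
        (\<forall>y. \<bar>m - y\<bar> < min (m - A1) (A2 - m) \<longrightarrow> wfun q m \<le> wfun q y)"
      using m(3) by (auto simp: abs_less_iff)
  qed (use m in simp)
  ultimately show False
    using wcrit_no_three_zeros[OF assms(1) _ _ \<open>A2 < ?D\<close> _ _ wcrit_Dstar[OF assms(1)]] by blast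
qed

lemma wfun_argmax_unique:
  assumes "q > 0"
  shows "\<exists>!A. A \<in> {0..Dstar q} \<and> (\<forall>B\<in>{0..Dstar q}. wfun q B \<le> wfun q A)"
proof -
  obtain A where "A \<in> {0..Dstar q}" "\<forall>B\<in>{0..Dstar q}. wfun q B \<le> wfun q A"
    using continuous_attains_sup[OF compact_Icc _ continuous_on_wfun[OF assms, of "Dstar q"]]
      Dstar(1)[OF assms] by auto
  then show ?thesis
    using wfun_maximizers_not_less[OF assms] by (intro ex1I[of _ A]) (blast intro: linorder_neqE)+
qed

lemma Astar:
  assumes "q > 0"
  shows "Astar q \<in> {0..Dstar q}" and "\<forall>B\<in>{0..Dstar q}. wfun q B \<le> wfun q (Astar q)"
  using theI'[OF wfun_argmax_unique[OF assms]] unfolding Astar_def by auto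

lemma hfun_eq_wfun:
  assumes "q > 0" "t < 1" "\<bar>x\<bar> < Dstar q * sqrt (1 - t)"
  shows "hfun q t x =
    (1 - t) powr (q / 2) * Gq q (\<bar>x\<bar> / sqrt (1 - t)) * wfun q (\<bar>x\<bar> / sqrt (1 - t))"
proof -
  let ?s = "sqrt (1 - t)"
  have "?s > 0"
    using assms(2) by simp
  have "FGq q (x / ?s) = FGq q (\<bar>x\<bar> / ?s)"
    using FGq_minus[of q "x / ?s"] by (cases "x \<ge> 0") auto
  moreover have "\<bar>x\<bar> powr q = (1 - t) powr (q / 2) * (\<bar>x\<bar> / ?s) powr q"
    using \<open>?s > 0\<close> assms(2) by (simp add: powr_divide powr_half_sqrt[symmetric] powr_powr)
  moreover have "Gq q (\<bar>x\<bar> / ?s) \<noteq> 0" "FGq q (Dstar q) \<noteq> 0"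
    using Gq_pos[OF assms(1)] FGq_pos[OF assms(1)] by (simp_all add: less_imp_neq[symmetric])
  ultimately show ?thesis
    unfolding hfun_def Ubar_def wfun_eq wnum_def Ubar_coeff_def using assms(3)
    by (simp add: field_simps)
qed

theorem lemma5p3:
  fixes q t x :: real
  assumes "q > 0" and "0 \<le> t" and "t < 1"
  shows "Wstar q t x \<ge> hfun q t x"
proof (cases "\<bar>x\<bar> > Astar q * sqrt (1 - t)")
  case False
  then show ?thesis
    unfolding Wstar_def by simp
next
  case outer: True
  let ?y = "\<bar>x\<bar> / sqrt (1 - t)"
  have W: "Wstar q t x = (1 - t) powr (q / 2) * Gq q ?y * wfun q (Astar q)"
    unfolding Wstar_def using outer by simp
  have scale_pos: "(1 - t) powr (q / 2) * Gq q ?y > 0"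
    using Gq_pos[OF assms(1)] assms(3) by simp
  show ?thesis
  proof (cases "\<bar>x\<bar> < Dstar q * sqrt (1 - t)")
    case False
    then show ?thesis
      unfolding W hfun_def using scale_pos wfun_maximizer_pos[OF assms(1) Astar(2)[OF assms(1)]] by simp
  next
    case True
    then have "?y \<in> {0..Dstar q}"
      using assms(3) by (simp add: divide_le_eq)
    then show ?thesis
      unfolding W hfun_eq_wfun[OF assms(1,3) True] using Astar(2)[OF assms(1)] scale_pos
      by (simp add: mult_left_mono)
  qed
qed

end
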